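(* Let $w,w'\in[0,1]$ with $w+w'=1$. If a $gH$-differentiable IVF $\textbf{F}$ on a nonempty subset $\mathcal{X}$ of $\mathbb{R}^n$ has $gH$-Lipschitz gradient, then for some $L>0$, \[\lVert\mathcal{W}(\nabla\textbf{F}(x))-\mathcal{W}(\nabla\textbf{F}(y))\rVert\le L\lVert x-y\rVert\quad\text{for all }x,y\in\mathcal{X}.\]
   Context: $I(\mathbb{R})$: closed bounded intervals $\textbf{A}=[\underline{a},\overline{a}]$ with Moore arithmetic ($\oplus$ endpointwise; $\lambda\odot\textbf{A}=[\lambda\underline{a},\lambda\overline{a}]$ if $\lambda\ge0$, $[\lambda\overline{a},\lambda\underline{a}]$ if $\lambda<0$); $\textbf{A}\ominus_{gH}\textbf{B}=[\min\{\underline{a}-\underline{b},\overline{a}-\overline{b}\},\max\{\underline{a}-\underline{b},\overline{a}-\overline{b}\}]$ (componentwise on $I(\mathbb{R})^n$). Norms: $\lVert\textbf{A}\rVert_{I(\mathbb{R})}=\max\{|\underline{a}|,|\overline{a}|\}$, $\lVert(\textbf{A}_i)\rVert_{I(\mathbb{R})^n}=\sum_i\lVert\textbf{A}_i\rVert_{I(\mathbb{R})}$, $\lVert\cdot\rVert$ Euclidean on $\mathbb{R}^n$. $D_i\textbf{F}(x)=\lim_{h\to0}\frac1h\odot(\textbf{F}(x+he_i)\ominus_{gH}\textbf{F}(x))$, $\nabla\textbf{F}(x)=(D_1\textbf{F}(x),\dots,D_n\textbf{F}(x))^T$. Linear IVF: $\textbf{L}(x)=\bigoplus_i x_i\odot\textbf{L}(e_i)$.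 $\textbf{F}$ is $gH$-differentiable at $\bar{x}$ if there exist a linear IVF $\textbf{L}_{\bar{x}}$, an IVF $\textbf{E}(\textbf{F}(\bar{x});d)$ and $\delta>0$ with $(\textbf{F}(\bar{x}+d)\ominus_{gH}\textbf{F}(\bar{x}))\ominus_{gH}\textbf{L}_{\bar{x}}(d)=\lVert d\rVert\odot\textbf{E}(\textbf{F}(\bar{x});d)$ for $\lVert d\rVert<\delta$ and $\textbf{E}\to\textbf{0}$ as $\lVert d\rVert\to0$. $\textbf{F}$ has $gH$-Lipschitz gradient on $\mathcal{X}$ if there is $M>0$ with $\lVert\nabla\textbf{F}(x)\ominus_{gH}\nabla\textbf{F}(y)\rVert_{I(\mathbb{R})^n}\le M\lVert x-y\rVert$ for all $x,y\in\mathcal{X}$. $\mathcal{W}(\textbf{A}_1,\dots,\textbf{A}_n)=(w\underline{a}_1+w'\overline{a}_1,\dots,w\underline{a}_n+w'\overline{a}_n)^T$. *)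

theory Defs
  imports "HOL-Analysis.Analysis"
begin

text \<open>Closed bounded intervals [lo, hi] are represented as pairs (lo, hi) with lo \<le> hi.
  Pair addition (from the product instance) is the endpointwise Moore sum.\<close>

type_synonym interval = "real \<times> real"

definition is_ival :: "interval \<Rightarrow> bool" where
  "is_ival A \<longleftrightarrow> fst A \<le> snd A"

definition iscale :: "real \<Rightarrow> interval \<Rightarrow> interval" where
  "iscale l A = (if l \<ge> 0 then (l * fst A, l * snd A) else (l * snd A, l * fst A))"

definition gH_minus :: "interval \<Rightarrow> interval \<Rightarrow> interval" where
  "gH_minus A B = (min (fst A - fst B) (snd A - snd B), max (fst A - fst B) (snd A - snd B))"

definition inorm :: "interval \<Rightarrow> real" where
  "inorm A = max \<bar>fst A\<bar> \<bar>snd A\<bar>"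

definition inorm_vec :: "interval ^ 'n \<Rightarrow> real" where
  "inorm_vec A = (\<Sum>i\<in>UNIV. inorm (A $ i))"

definition gH_minus_vec :: "interval ^ 'n \<Rightarrow> interval ^ 'n \<Rightarrow> interval ^ 'n" where
  "gH_minus_vec A B = (\<chi> i. gH_minus (A $ i) (B $ i))"

definition linear_IVF :: "interval ^ 'n \<Rightarrow> real ^ 'n \<Rightarrow> interval" where
  "linear_IVF A d = (\<Sum>i\<in>UNIV. iscale (d $ i) (A $ i))"

definition gH_differentiable_at :: "(real ^ 'n \<Rightarrow> interval) \<Rightarrow> real ^ 'n \<Rightarrow> bool" where
  "gH_differentiable_at F x \<longleftrightarrow>
     (\<exists>A :: interval ^ 'n. (\<forall>i. is_ival (A $ i)) \<and>
      (\<exists>E :: real ^ 'n \<Rightarrow> interval. \<exists>\<delta>>0. (\<forall>d. is_ival (E d)) \<and>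
         (\<forall>d. norm d < \<delta> \<longrightarrow>
            gH_minus (gH_minus (F (x + d)) (F x)) (linear_IVF A d) = iscale (norm d) (E d)) \<and>
         (E \<longlongrightarrow> (0, 0)) (at 0)))"

definition gH_partial :: "(real ^ 'n \<Rightarrow> interval) \<Rightarrow> real ^ 'n \<Rightarrow> 'n \<Rightarrow> interval" where
  "gH_partial F x i = Lim (at (0::real))
     (\<lambda>h. iscale (1 / h) (gH_minus (F (x + h *\<^sub>R axis i 1)) (F x)))"

definition gH_gradient :: "(real ^ 'n \<Rightarrow> interval) \<Rightarrow> real ^ 'n \<Rightarrow> interval ^ 'n" where
  "gH_gradient F x = (\<chi> i. gH_partial F x i)"

definition gH_Lipschitz_gradient :: "(real ^ 'n \<Rightarrow> interval) \<Rightarrow> (real ^ 'n) set \<Rightarrow> bool" where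
  "gH_Lipschitz_gradient F X \<longleftrightarrow>
     (\<exists>M>0. \<forall>x\<in>X. \<forall>y\<in>X.
        inorm_vec (gH_minus_vec (gH_gradient F x) (gH_gradient F y)) \<le> M * norm (x - y))"

definition Wmap :: "real \<Rightarrow> real \<Rightarrow> interval ^ 'n \<Rightarrow> real ^ 'n" where
  "Wmap w w' A = (\<chi> i. w * fst (A $ i) + w' * snd (A $ i))"

end

theory Submission
  imports Defs
begin

text \<open>Componentwise, a convex combination of the two endpoint differences is bounded by the larger
  of them, which is the norm of the gH-difference; the Euclidean norm is bounded by the sum of the
  components. So the weighting map is 1-Lipschitz from the gH-distance to the Euclidean one, and
  the Lipschitz constant of the gradient works for the weighted gradient as well.\<close>

lemma inorm_gH_minus:
  "inorm (gH_minus A B) = max \<bar>fst A - fst B\<bar> \<bar>snd A - snd B\<bar>"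
  unfolding inorm_def gH_minus_def by (auto simp: min_def max_def)

lemma abs_convex_comb_le_max:
  fixes a b w w' :: real
  assumes "w \<ge> 0" and "w' \<ge> 0" and "w + w' = 1"
  shows "\<bar>w * a + w' * b\<bar> \<le> max \<bar>a\<bar> \<bar>b\<bar>"
proof -
  have "\<bar>w * a + w' * b\<bar> \<le> w * \<bar>a\<bar> + w' * \<bar>b\<bar>"
    using assms by (simp add: abs_mult order_trans[OF abs_triangle_ineq])
  also have "\<dots> \<le> w * max \<bar>a\<bar> \<bar>b\<bar> + w' * max \<bar>a\<bar> \<bar>b\<bar>"
    using assms by (intro add_mono mult_left_mono) auto
  also have "\<dots> = max \<bar>a\<bar> \<bar>b\<bar>"
    using assms by (simp add: distrib_right[symmetric])
  finally show ?thesis .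
qed

lemma abs_weighted_diff_le_inorm_gH_minus:
  assumes "w \<ge> 0" and "w' \<ge> 0" and "w + w' = 1"
  shows "\<bar>(w * fst A + w' * snd A) - (w * fst B + w' * snd B)\<bar> \<le> inorm (gH_minus A B)"
proof -
  have "(w * fst A + w' * snd A) - (w * fst B + w' * snd B)
        = w * (fst A - fst B) + w' * (snd A - snd B)"
    by (simp add: algebra_simps)
  then show ?thesis
    using abs_convex_comb_le_max[OF assms] by (simp add: inorm_gH_minus)
qed

lemma norm_Wmap_diff_le_inorm_vec:
  fixes A B :: "interval ^ 'n"
  assumes "w \<ge> 0" and "w' \<ge> 0" and "w + w' = 1"
  shows "norm (Wmap w w' A - Wmap w w' B) \<le> inorm_vec (gH_minus_vec A B)"
proof -
  have "norm (Wmap w w' A - Wmap w w' B) \<le> (\<Sum>i\<in>UNIV. \<bar>(Wmap w w' A - Wmap w w' B) $ i\<bar>)"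
    by (rule norm_le_l1_cart)
  also have "\<dots> \<le> (\<Sum>i\<in>UNIV. inorm (gH_minus (A $ i) (B $ i)))"
    by (intro sum_mono) (simp add: Wmap_def abs_weighted_diff_le_inorm_gH_minus[OF assms])
  also have "\<dots> = inorm_vec (gH_minus_vec A B)"
    by (simp add: inorm_vec_def gH_minus_vec_def)
  finally show ?thesis .
qed

theorem lemma5p5:
  fixes F :: "real ^ 'n \<Rightarrow> interval" and X :: "(real ^ 'n) set" and w w' :: real
  assumes "w \<in> {0..1}" and "w' \<in> {0..1}" and "w + w' = 1"
    and "X \<noteq> {}"
    and "\<forall>x. is_ival (F x)"
    and "\<forall>x\<in>X. gH_differentiable_at F x"
    and "gH_Lipschitz_gradient F X"
  shows "\<exists>L>0. \<forall>x\<in>X. \<forall>y\<in>X.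
           norm (Wmap w w' (gH_gradient F x) - Wmap w w' (gH_gradient F y)) \<le> L * norm (x - y)"
proof -
  obtain M where "M > 0" and M: "\<forall>x\<in>X. \<forall>y\<in>X.
        inorm_vec (gH_minus_vec (gH_gradient F x) (gH_gradient F y)) \<le> M * norm (x - y)"
    using assms(7) unfolding gH_Lipschitz_gradient_def by blast
  have weights: "w \<ge> 0" "w' \<ge> 0" "w + w' = 1"
    using assms(1-3) by auto
  have "norm (Wmap w w' (gH_gradient F x) - Wmap w w' (gH_gradient F y)) \<le> M * norm (x - y)"
    if "x \<in> X" and "y \<in> X" for x y
    using norm_Wmap_diff_le_inorm_vec[OF weights] M that by (meson order_trans)
  with \<open>M > 0\<close> show ?thesis by blast
qed

end
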